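(* Let $\boldsymbol\eta$ be a standard max-stable process, let $\mathbf Y$ be a stochastic process in $C[0,1]$ with independent copies $\mathbf Y_1,\mathbf Y_2,\dots$, and let $a_n\in C[0,1]$ with $a_n>0$ and $b_n\in C[0,1]$, $n\in\mathbb N$. Then \[ \lim_{n\to\infty}P\Big(\max_{1\le i\le n}\frac{\mathbf Y_i-b_n}{a_n}\le f\Big)=P(\boldsymbol\eta\le f)\quad\text{for every } f\in\bar E^-[0,1] \] holds if and only if \[ \lim_{n\to\infty}P\Big(\max_{1\le i\le n}\frac{\mathbf Y_i-b_n}{a_n}< f\Big)=P(\boldsymbol\eta< f)\quad\text{for every } f\in\bar E^-[0,1]. \]
   Context: $E[0,1]$: bounded functions on $[0,1]$ with finitely many discontinuities; $\bar E^-[0,1]=\{f\in E[0,1]:f\le 0\}$. Maxima and inequalities between processes and functions are pointwise ($\le f$ meaning $\le f(t)$ for all $t$, $<f$ meaning $<f(t)$ for all $t$). A standard max-stable process is a process $\boldsymbol\eta$ with paths in $\bar C^-[0,1]=\{f\in C[0,1]:f\le0\}$ that is max-stable (for iid copies and each $n$ there are $\alpha_n>0,\beta_n\in C[0,1]$ with $\boldsymbol\eta=_D\max_{i\le n}(\boldsymbol\eta_i-\beta_n)/\alpha_n$) and has margins $P(\eta_t\le x)=e^x$, $x\le 0$; its functional distribution function is $P(\boldsymbol\eta\le f)=\exp(-\|f\|_D)$, $f\in\bar E^-[0,1]$, where $\|f\|_D=E(\sup_t|f(t)|Z_t)$ for a generator process $\mathbf Z$ (continuous nonnegative paths, $\max_tZ_t=m\in[1,\infty)$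 a.s., $E Z_t=1$). The first displayed condition is the definition of "$\mathbf Y$ is in the functional domain of attraction of $\boldsymbol\eta$". *)

theory Defs
  imports "HOL-Probability.Probability"
begin

text \<open>Functions on [0,1] are represented as real \<Rightarrow> real; only values on {0..1} matter.\<close>

definition C01 :: "(real \<Rightarrow> real) set" where
  "C01 = {f. continuous_on {0..1} f}"

definition E01 :: "(real \<Rightarrow> real) set" where
  "E01 = {f. bounded (f ` {0..1}) \<and>
              finite {t \<in> {0..1}. \<not> continuous (at t within {0..1}) f}}"

definition E01neg :: "(real \<Rightarrow> real) set" where
  "E01neg = {f \<in> E01. \<forall>t\<in>{0..1}. f t \<le> 0}"

abbreviation P01 :: "(real \<Rightarrow> real) measure" where
  "P01 \<equiv> PiM {0..1} (\<lambda>_. borel)"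

definition cont_process :: "'a measure \<Rightarrow> ('a \<Rightarrow> real \<Rightarrow> real) \<Rightarrow> bool" where
  "cont_process M X \<longleftrightarrow>
     (\<forall>t\<in>{0..1}. (\<lambda>\<omega>. X \<omega> t) \<in> borel_measurable M) \<and>
     (\<forall>\<omega>\<in>space M. continuous_on {0..1} (X \<omega>))"

definition path_law :: "'a measure \<Rightarrow> ('a \<Rightarrow> real \<Rightarrow> real) \<Rightarrow> (real \<Rightarrow> real) measure" where
  "path_law M X = distr M P01 (\<lambda>\<omega>. restrict (X \<omega>) {0..1})"

definition std_max_stable :: "'a measure \<Rightarrow> ('a \<Rightarrow> real \<Rightarrow> real) \<Rightarrow> bool" where
  "std_max_stable N \<eta> \<longleftrightarrow>
     prob_space N \<and> cont_process N \<eta> \<and>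
     (\<forall>\<omega>\<in>space N. \<forall>t\<in>{0..1}. \<eta> \<omega> t \<le> 0) \<and>
     (\<forall>n::nat. n \<ge> 1 \<longrightarrow> (\<exists>\<alpha> \<beta>. continuous_on {0..1} \<alpha> \<and> (\<forall>t\<in>{0..1}. \<alpha> t > 0) \<and>
        continuous_on {0..1} \<beta> \<and>
        distr (PiM {..<n} (\<lambda>_. path_law N \<eta>)) P01
          (\<lambda>gs. \<lambda>t\<in>{0..1}. (MAX i\<in>{..<n}. (gs i t - \<beta> t) / \<alpha> t))
        = path_law N \<eta>)) \<and>
     (\<forall>t\<in>{0..1}. \<forall>x::real. x \<le> 0 \<longrightarrow> measure N {\<omega> \<in> space N. \<eta> \<omega> t \<le> x} = exp x)"

definition indep_copies :: "'a measure \<Rightarrow> ('a \<Rightarrow> real \<Rightarrow> real) \<Rightarrow> (nat \<Rightarrow> 'a \<Rightarrow> real \<Rightarrow> real) \<Rightarrow> bool" where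
  "indep_copies M Y Ys \<longleftrightarrow>
     prob_space.indep_vars M (\<lambda>_. P01) (\<lambda>i \<omega>. restrict (Ys i \<omega>) {0..1}) UNIV \<and>
     (\<forall>i. path_law M (Ys i) = path_law M Y)"

end

theory Submission
  imports Defs
begin

(* The limit process has a continuous functional distribution function: for f in E\<^sup>-[0,1],
   P(\<eta> < f) = P(\<eta> \<le> f) = lim P(\<eta> \<le> f - 1/(j+1)) = lim P(\<eta> \<le> min (f + 1/(j+1)) 0).
   Standard margins force the norming constants of max-stability to be 1/n and 0, so
   P(\<eta> \<le> f) = P(\<eta> \<le> f/n)^n.  For step functions this makes P(\<eta> has a zero in [0,s])
   either 0 or 1 for every s; then the first zero of \<eta> would be a.s. a constant time c,
   contradicting P(\<eta>(c) \<le> -1) = exp(-1).  So \<eta> < 0 on [0,1] a.s., and together with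
   P(\<eta> \<le> (1 + 1/k) f) = P(\<eta> \<le> f)^(1 + 1/k) this gives continuity from below.
   The equivalence then holds for any sequence of continuous processes X_n, by the sandwich
   P(X_n \<le> f - c) \<le> P(X_n < f) \<le> P(X_n \<le> f) \<le> P(X_n < min (f + c) 0) + 1 - P(X_n < 0). *)

definition discontinuities :: "(real \<Rightarrow> real) \<Rightarrow> real set" where
  "discontinuities g = {t \<in> {0..1}. \<not> continuous (at t within {0..1}) g}"

definition path_le :: "'a measure \<Rightarrow> ('a \<Rightarrow> real \<Rightarrow> real) \<Rightarrow> (real \<Rightarrow> real) \<Rightarrow> 'a set" where
  "path_le M X g = {\<omega> \<in> space M. \<forall>t\<in>{0..1}. X \<omega> t \<le> g t}"

definition path_less :: "'a measure \<Rightarrow> ('a \<Rightarrow> real \<Rightarrow> real) \<Rightarrow> (real \<Rightarrow> real) \<Rightarrow> 'a set" where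
  "path_less M X g = {\<omega> \<in> space M. \<forall>t\<in>{0..1}. X \<omega> t < g t}"

lemma continuous_at_within_unit_if_not_discontinuity:
  "t \<in> {0..1} \<Longrightarrow> t \<notin> discontinuities g \<Longrightarrow> continuous (at t within {0..1}) g"
  unfolding discontinuities_def by auto

lemma discontinuities_subset: "discontinuities g \<subseteq> {0..1}"
  unfolding discontinuities_def by auto

lemma discontinuities_comp:
  assumes "continuous_on UNIV h"
  shows "discontinuities (\<lambda>t. h (g t)) \<subseteq> discontinuities g"
proof
  fix t assume t: "t \<in> discontinuities (\<lambda>t. h (g t))"
  have "isCont h (g t)" using assms continuous_on_eq_continuous_at open_UNIV by blast
  then show "t \<in> discontinuities g"
    using t continuous_within_compose3[where f=g] unfolding discontinuities_def by blast
qed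

lemma finite_discontinuities_comp:
  "continuous_on UNIV h \<Longrightarrow> finite (discontinuities g) \<Longrightarrow> finite (discontinuities (\<lambda>t. h (g t)))"
  by (rule finite_subset[OF discontinuities_comp])

lemma discontinuities_const [simp]: "discontinuities (\<lambda>t. c) = {}"
  unfolding discontinuities_def by simp

lemma discontinuities_step: "discontinuities (\<lambda>t. if t \<le> s then a else b) \<subseteq> {s}"
proof
  fix t assume t: "t \<in> discontinuities (\<lambda>t. if t \<le> s then a else b)"
  have cont: "isCont (\<lambda>x. if x \<le> s then a else b) t" if "t \<noteq> s"
  proof (cases "t < s")
    case True
    then have "\<forall>\<^sub>F x in nhds t. x \<in> {..<s}" by (intro eventually_nhds_in_open) auto
    then have "\<forall>\<^sub>F x in nhds t. (if x \<le> s then a else b) = a" by (rule eventually_mono) auto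
    then show ?thesis by (subst isCont_cong) (assumption, simp)
  next
    case False
    then have "\<forall>\<^sub>F x in nhds t. x \<in> {s<..}" using that by (intro eventually_nhds_in_open) auto
    then have "\<forall>\<^sub>F x in nhds t. (if x \<le> s then a else b) = b" by (rule eventually_mono) auto
    then show ?thesis by (subst isCont_cong) (assumption, simp)
  qed
  show "t \<in> {s}"
  proof (rule ccontr)
    assume "t \<notin> {s}"
    then have "continuous (at t within {0..1}) (\<lambda>x. if x \<le> s then a else b)"
      using cont continuous_at_imp_continuous_at_within by auto
    then show False using t by (simp add: discontinuities_def)
  qed
qed

lemma finite_discontinuities_step: "finite (discontinuities (\<lambda>t. if t \<le> s then a else b))"
  by (rule finite_subset[OF discontinuities_step]) simp

lemma countable_rationals_and_discontinuities:
  "finite (discontinuities g) \<Longrightarrow> countable (\<rat> \<inter> {0..1} \<union> discontinuities g)"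
  by (rule countable_Un) (auto intro: countable_subset[OF _ countable_rat] countable_finite)

lemma rational_near_unit:
  fixes t r :: real
  assumes t: "t \<in> {0..1}" and r: "r > 0"
  obtains q where "q \<in> \<rat>" "q \<in> {0..1}" "\<bar>q - t\<bar> < r"
proof -
  define l u where "l = max (t - r) 0" and "u = min (t + r) 1"
  have "l < u" using t r unfolding l_def u_def by auto
  then obtain q where q: "q \<in> \<rat>" "l < q" "q < u" using Rats_dense_in_real by blast
  have "0 \<le> q" "q \<le> 1" "t - r < q" "q < t + r" using q unfolding l_def u_def by auto
  then show thesis using q(1) by (intro that[of q]) auto
qed

lemma le_at_point_if_le_at_nearby_rationals:
  fixes h :: "real \<Rightarrow> real"
  assumes cont: "continuous (at t within {0..1}) h" and t: "t \<in> {0..1}" and d: "d > 0"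
    and le: "\<And>q. q \<in> \<rat> \<Longrightarrow> q \<in> {0..1} \<Longrightarrow> \<bar>q - t\<bar> < d \<Longrightarrow> h q \<le> C"
  shows "h t \<le> C"
proof (rule ccontr)
  assume "\<not> h t \<le> C"
  then have "h t - C > 0" by simp
  with cont obtain e where e: "e > 0" "\<forall>s\<in>{0..1}. dist s t < e \<longrightarrow> dist (h s) (h t) < h t - C"
    unfolding continuous_within_eps_delta by blast
  obtain q where q: "q \<in> \<rat>" "q \<in> {0..1}" "\<bar>q - t\<bar> < min e d"
    using rational_near_unit[OF t] e d by (metis min_less_iff_conj)
  then have "h q \<le> C" using le by simp
  moreover have "\<bar>h q - h t\<bar> < h t - C" using e(2) q by (simp add: dist_real_def)
  ultimately show False by (simp add: abs_less_iff)
qed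

lemma le_on_unit_iff_le_on_dense:
  fixes x g :: "real \<Rightarrow> real"
  assumes x: "continuous_on {0..1} x"
    and S: "\<rat> \<inter> {0..1} \<subseteq> S" "discontinuities g \<subseteq> S" "S \<subseteq> {0..1}"
  shows "(\<forall>t\<in>{0..1}. x t \<le> g t) \<longleftrightarrow> (\<forall>t\<in>S. x t \<le> g t)"
proof
  show "\<forall>t\<in>S. x t \<le> g t" if "\<forall>t\<in>{0..1}. x t \<le> g t"
    using that S(3) by blast
next
  assume le: "\<forall>t\<in>S. x t \<le> g t"
  show "\<forall>t\<in>{0..1}. x t \<le> g t"
  proof
    fix t :: real assume t: "t \<in> {0..1}"
    show "x t \<le> g t"
    proof (cases "t \<in> discontinuities g")
      case False
      then have "continuous (at t within {0..1}) (\<lambda>s. x s - g s)"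
        using x t continuous_at_within_unit_if_not_discontinuity
        by (intro continuous_intros) (auto simp: continuous_on_eq_continuous_within)
      moreover have "x q - g q \<le> 0" if "q \<in> \<rat>" "q \<in> {0..1}" for q
        using le S(1) that by auto
      ultimately have "x t - g t \<le> 0"
        by (rule le_at_point_if_le_at_nearby_rationals[OF _ t zero_less_one])
      then show ?thesis by simp
    qed (use le S(2) in auto)
  qed
qed

lemma compact_imp_uniformly_negative:
  fixes h :: "real \<Rightarrow> real"
  assumes "compact K" "continuous_on K h" "\<forall>t\<in>K. h t < 0"
  shows "\<exists>j::nat. \<forall>t\<in>K. h t \<le> -1 / real (Suc j)"
proof (cases "K = {}")
  case False
  obtain s where s: "s \<in> K" "\<forall>t\<in>K. h t \<le> h s"
    using continuous_attains_sup[OF assms(1) False assms(2)] by auto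
  obtain j :: nat where "inverse (real (Suc j)) < - h s"
    using reals_Archimedean[of "- h s"] s(1) assms(3) by auto
  then have "h s \<le> -1 / real (Suc j)" by (simp add: inverse_eq_divide)
  then have "\<forall>t\<in>K. h t \<le> -1 / real (Suc j)" using s(2) by (meson order_trans)
  then show ?thesis ..
qed simp

(* A countable substitute for x < g away from the jumps of g, which makes {x < g} measurable.
   Near a jump g - x need not stay away from 0, hence the gap is asked for only at distance
   1/(m+1) from the jumps, for every m. *)

definition rational_gap :: "(real \<Rightarrow> real) \<Rightarrow> (real \<Rightarrow> real) \<Rightarrow> bool" where
  "rational_gap x g \<longleftrightarrow> (\<forall>m::nat. \<exists>j::nat. \<forall>q\<in>\<rat> \<inter> {0..1}.
        (\<forall>y\<in>discontinuities g. 1 / real (Suc m) \<le> \<bar>q - y\<bar>) \<longrightarrow> x q - g q \<le> -1 / real (Suc j))"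

lemma less_on_unit_imp_uniform_gap:
  fixes x g :: "real \<Rightarrow> real"
  assumes x: "continuous_on {0..1} x" and less: "\<forall>t\<in>{0..1}. x t < g t"
  shows "\<exists>j::nat. \<forall>t\<in>{0..1}. (\<forall>y\<in>discontinuities g. 1 / real (Suc m) \<le> \<bar>t - y\<bar>) \<longrightarrow>
           x t - g t \<le> -1 / real (Suc j)"
proof -
  define K where "K = {0..1} \<inter> (\<Inter>y\<in>discontinuities g. {t. 1 / real (Suc m) \<le> \<bar>t - y\<bar>})"
  have "compact K"
    unfolding K_def by (intro compact_Int_closed compact_Icc closed_INT ballI closed_Collect_le continuous_intros) auto
  moreover have "continuous_on K (\<lambda>t. x t - g t)"
    unfolding continuous_on_eq_continuous_within
  proof
    fix t assume t: "t \<in> K"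
    then have "t \<in> {0..1}" "t \<notin> discontinuities g" unfolding K_def by auto
    then have "continuous (at t within {0..1}) (\<lambda>s. x s - g s)"
      using x continuous_at_within_unit_if_not_discontinuity
      by (intro continuous_intros) (auto simp: continuous_on_eq_continuous_within)
    then show "continuous (at t within K) (\<lambda>s. x s - g s)"
      by (rule continuous_within_subset) (auto simp: K_def)
  qed
  moreover have "\<forall>t\<in>K. x t - g t < 0" using less unfolding K_def by auto
  ultimately obtain j :: nat where j: "\<forall>t\<in>K. x t - g t \<le> -1 / real (Suc j)"
    using compact_imp_uniformly_negative by blast
  show ?thesis
    by (rule exI[of _ j]) (use j in \<open>auto simp: K_def\<close>)
qed

lemma finite_set_avoided_by_margin:
  fixes t :: real
  assumes "finite F" "t \<notin> F"
  obtains d where "d > 0" "\<forall>y\<in>F. d \<le> \<bar>t - y\<bar>"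
proof (cases "F = {}")
  case False
  let ?d = "Min ((\<lambda>y. \<bar>t - y\<bar>) ` F)"
  have "?d > 0" using assms False by (subst Min_gr_iff) auto
  moreover have "\<forall>y\<in>F. ?d \<le> \<bar>t - y\<bar>" using assms by auto
  ultimately show thesis by (rule that)
qed (rule that[of 1], auto)

lemma less_on_unit_if_rational_gap:
  fixes x g :: "real \<Rightarrow> real"
  assumes x: "continuous_on {0..1} x" and D: "finite (discontinuities g)"
    and less: "\<forall>t\<in>discontinuities g. x t < g t"
    and gap: "rational_gap x g"
  shows "\<forall>t\<in>{0..1}. x t < g t"
proof
  fix t :: real assume t: "t \<in> {0..1}"
  show "x t < g t"
  proof (cases "t \<in> discontinuities g")
    case False
    obtain d where d: "d > 0" "\<forall>y\<in>discontinuities g. d \<le> \<bar>t - y\<bar>"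
      using finite_set_avoided_by_margin[OF D False] by blast
    obtain m :: nat where m: "1 / real (Suc m) < d / 2"
      using reals_Archimedean[of "d / 2"] d by (auto simp: inverse_eq_divide)
    obtain j :: nat where j: "\<forall>q\<in>\<rat> \<inter> {0..1}.
        (\<forall>y\<in>discontinuities g. 1 / real (Suc m) \<le> \<bar>q - y\<bar>) \<longrightarrow> x q - g q \<le> -1 / real (Suc j)"
      using gap unfolding rational_gap_def by blast
    have "continuous (at t within {0..1}) (\<lambda>s. x s - g s)"
      using x t False continuous_at_within_unit_if_not_discontinuity
      by (intro continuous_intros) (auto simp: continuous_on_eq_continuous_within)
    then have "x t - g t \<le> -1 / real (Suc j)"
    proof (rule le_at_point_if_le_at_nearby_rationals[OF _ t, where d = "d / 2"])
      fix q assume q: "q \<in> \<rat>" "q \<in> {0..1}" "\<bar>q - t\<bar> < d / 2"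
      have "1 / real (Suc m) \<le> \<bar>q - y\<bar>" if "y \<in> discontinuities g" for y
        using d(2) that q(3) m by (force simp: abs_if split: if_splits)
      then show "x q - g q \<le> -1 / real (Suc j)" using j q by blast
    qed (use d in simp)
    moreover have "-1 / real (Suc j) < 0" by simp
    ultimately show ?thesis by linarith
  qed (use less in simp)
qed

lemma less_on_unit_iff_rational_gap:
  fixes x g :: "real \<Rightarrow> real"
  assumes x: "continuous_on {0..1} x" and D: "finite (discontinuities g)"
  shows "(\<forall>t\<in>{0..1}. x t < g t) \<longleftrightarrow> (\<forall>t\<in>discontinuities g. x t < g t) \<and> rational_gap x g"
proof
  assume less: "\<forall>t\<in>{0..1}. x t < g t"
  have "\<exists>j::nat. \<forall>q\<in>\<rat> \<inter> {0..1}.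
      (\<forall>y\<in>discontinuities g. 1 / real (Suc m) \<le> \<bar>q - y\<bar>) \<longrightarrow> x q - g q \<le> -1 / real (Suc j)" for m
    using less_on_unit_imp_uniform_gap[OF x less, of m] by auto
  then have "rational_gap x g" unfolding rational_gap_def by blast
  then show "(\<forall>t\<in>discontinuities g. x t < g t) \<and> rational_gap x g"
    using less discontinuities_subset by blast
qed (use less_on_unit_if_rational_gap[OF x D] in blast)

lemma path_le_mono: "(\<And>t. t \<in> {0..1} \<Longrightarrow> g t \<le> h t) \<Longrightarrow> path_le M X g \<subseteq> path_le M X h"
  unfolding path_le_def by (auto intro: order_trans)

lemma measurable_path_value:
  "cont_process M X \<Longrightarrow> t \<in> {0..1} \<Longrightarrow> (\<lambda>\<omega>. X \<omega> t) \<in> borel_measurable M"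
  unfolding cont_process_def by blast

lemma sets_Collect_le_on_countable:
  assumes X: "cont_process M X" and S: "S \<subseteq> {0..1}" "countable S"
  shows "{\<omega> \<in> space M. \<forall>t\<in>S. X \<omega> t \<le> g t} \<in> sets M"
proof (rule sets.sets_Collect_countable_All'[OF _ S(2)])
  fix t assume "t \<in> S"
  then have [measurable]: "(\<lambda>\<omega>. X \<omega> t) \<in> borel_measurable M" using X S(1) measurable_path_value by blast
  show "{\<omega> \<in> space M. X \<omega> t \<le> g t} \<in> sets M" by measurable
qed

lemma path_le_eq_le_on_dense:
  assumes "cont_process M X" "\<rat> \<inter> {0..1} \<subseteq> S" "discontinuities g \<subseteq> S" "S \<subseteq> {0..1}"
  shows "path_le M X g = {\<omega> \<in> space M. \<forall>t\<in>S. X \<omega> t \<le> g t}"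
  unfolding path_le_def
proof (rule Collect_cong, rule conj_cong[OF refl])
  fix \<omega> assume "\<omega> \<in> space M"
  then have "continuous_on {0..1} (X \<omega>)" using assms(1) by (simp add: cont_process_def)
  then show "(\<forall>t\<in>{0..1}. X \<omega> t \<le> g t) = (\<forall>t\<in>S. X \<omega> t \<le> g t)"
    by (rule le_on_unit_iff_le_on_dense[OF _ assms(2-4)])
qed

lemma sets_path_le:
  assumes "cont_process M X" "finite (discontinuities g)"
  shows "path_le M X g \<in> sets M"
proof -
  let ?S = "\<rat> \<inter> {0..1} \<union> discontinuities g"
  have "path_le M X g = {\<omega> \<in> space M. \<forall>t\<in>?S. X \<omega> t \<le> g t}"
    using discontinuities_subset by (intro path_le_eq_le_on_dense[OF assms(1)]) auto
  also have "\<dots> \<in> sets M"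
    using discontinuities_subset countable_rationals_and_discontinuities[OF assms(2)]
    by (intro sets_Collect_le_on_countable[OF assms(1)]) auto
  finally show ?thesis .
qed

lemma sets_path_less:
  assumes X: "cont_process M X" and D: "finite (discontinuities g)"
  shows "path_less M X g \<in> sets M"
proof -
  have Q: "countable (\<rat> \<inter> {0..1})" by (rule countable_subset[OF _ countable_rat]) auto
  have "path_less M X g = {\<omega> \<in> space M. (\<forall>t\<in>discontinuities g. X \<omega> t < g t) \<and> rational_gap (X \<omega>) g}"
    unfolding path_less_def
  proof (rule Collect_cong, rule conj_cong[OF refl])
    fix \<omega> assume "\<omega> \<in> space M"
    then have "continuous_on {0..1} (X \<omega>)" using X by (simp add: cont_process_def)
    then show "(\<forall>t\<in>{0..1}. X \<omega> t < g t) = ((\<forall>t\<in>discontinuities g. X \<omega> t < g t) \<and> rational_gap (X \<omega>) g)"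
      by (rule less_on_unit_iff_rational_gap[OF _ D])
  qed
  also have "\<dots> \<in> sets M"
    unfolding rational_gap_def
  proof (intro sets.sets_Collect_conj sets.sets_Collect_countable_All sets.sets_Collect_countable_Ex
      sets.sets_Collect_countable_All'[OF _ countable_finite[OF D]] sets.sets_Collect_countable_All'[OF _ Q]
      sets.sets_Collect_imp sets.sets_Collect_const)
    show "{\<omega> \<in> space M. X \<omega> t < g t} \<in> sets M" if "t \<in> discontinuities g" for t
    proof -
      have [measurable]: "(\<lambda>\<omega>. X \<omega> t) \<in> borel_measurable M"
        using that discontinuities_subset by (intro measurable_path_value[OF X]) blast
      show ?thesis by measurable
    qed
    show "{\<omega> \<in> space M. X \<omega> q - g q \<le> -1 / real (Suc j)} \<in> sets M" if "q \<in> \<rat> \<inter> {0..1}" for q j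
    proof -
      have [measurable]: "(\<lambda>\<omega>. X \<omega> q) \<in> borel_measurable M"
        using that by (intro measurable_path_value[OF X]) blast
      show ?thesis by measurable
    qed
  qed
  finally show ?thesis .
qed

lemma (in prob_space) prob_Int_ge:
  assumes "A \<in> events" "B \<in> events"
  shows "prob A - (1 - prob B) \<le> prob (A \<inter> B)"
proof -
  have "prob A = prob (A \<inter> B) + prob (A - B)"
    using assms by (subst finite_measure_Union[symmetric]) (auto intro: arg_cong[where f = prob])
  also have "prob (A - B) \<le> prob (space M - B)"
    using assms by (intro finite_measure_mono) (auto dest: sets.sets_into_space)
  also have "prob (space M - B) = 1 - prob B" by (rule prob_compl[OF assms(2)])
  finally show ?thesis by simp
qed

lemma tendsto_of_approximating_bounds:
  fixes u :: "nat \<Rightarrow> real" and lo hi :: "nat \<Rightarrow> nat \<Rightarrow> real"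
  assumes lo: "\<And>j n. lo j n \<le> u n" and hi: "\<And>j n. u n \<le> hi j n"
    and "\<And>j. lo j \<longlonglongrightarrow> A j" "\<And>j. hi j \<longlonglongrightarrow> B j" and "A \<longlonglongrightarrow> L" "B \<longlonglongrightarrow> L"
  shows "u \<longlonglongrightarrow> L"
proof (rule tendstoI)
  fix e :: real assume e: "e > 0"
  have "\<forall>\<^sub>F j in sequentially. dist (A j) L < e / 2 \<and> dist (B j) L < e / 2"
    using e assms(5,6) by (intro eventually_conj tendstoD) auto
  then obtain j where j: "dist (A j) L < e / 2" "dist (B j) L < e / 2"
    unfolding eventually_sequentially by blast
  have "\<forall>\<^sub>F n in sequentially. dist (lo j n) (A j) < e / 2 \<and> dist (hi j n) (B j) < e / 2"
    using e assms(3,4) by (intro eventually_conj tendstoD) auto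
  then show "\<forall>\<^sub>F n in sequentially. dist (u n) L < e"
  proof eventually_elim
    case (elim n)
    then show ?case using lo[where j = j and n = n] hi[where j = j and n = n] j unfolding dist_real_def abs_less_iff by linarith
  qed
qed

lemma measure_path_less_le_path_le:
  assumes "finite_measure M" "cont_process M X" "finite (discontinuities g)"
  shows "measure M (path_less M X g) \<le> measure M (path_le M X g)"
  using assms(2,3)
  by (intro finite_measure.finite_measure_mono[OF assms(1)] sets_path_le) (auto simp: path_less_def path_le_def)

lemma measure_path_le_shift_le_path_less:
  assumes "finite_measure M" "cont_process M X" "finite (discontinuities g)" "c > 0"
  shows "measure M (path_le M X (\<lambda>t. g t - c)) \<le> measure M (path_less M X g)"
  using assms(2-4)
  by (intro finite_measure.finite_measure_mono[OF assms(1)] sets_path_less) (auto simp: path_less_def path_le_def)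

lemma measure_path_le_le_path_less_shift:
  assumes M: "prob_space M" and X: "cont_process M X" and g: "finite (discontinuities g)" and c: "c > 0"
  shows "measure M (path_le M X g) \<le>
    measure M (path_less M X (\<lambda>t. min (g t + c) 0)) + (1 - measure M (path_less M X (\<lambda>_. 0)))"
proof -
  interpret prob_space M by (rule M)
  have "continuous_on UNIV (\<lambda>x. min (x + c) 0)" by (intro continuous_intros)
  from finite_discontinuities_comp[OF this g]
  have "path_less M X (\<lambda>t. min (g t + c) 0) \<in> events" by (rule sets_path_less[OF X])
  moreover have "path_le M X g \<inter> path_less M X (\<lambda>_. 0) \<subseteq> path_less M X (\<lambda>t. min (g t + c) 0)"
    using c unfolding path_le_def path_less_def by force
  ultimately have "prob (path_le M X g \<inter> path_less M X (\<lambda>_. 0)) \<le> prob (path_less M X (\<lambda>t. min (g t + c) 0))"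
    by (rule finite_measure_mono[rotated])
  moreover have "prob (path_le M X g) - (1 - prob (path_less M X (\<lambda>_. 0))) \<le>
      prob (path_le M X g \<inter> path_less M X (\<lambda>_. 0))"
    using g by (intro prob_Int_ge sets_path_le[OF X] sets_path_less[OF X]) auto
  ultimately show ?thesis by linarith
qed

lemma tendsto_measure_path_le_from_above:
  assumes M: "prob_space M" and X: "cont_process M X" and g: "finite (discontinuities g)"
    and nonpos: "\<forall>t\<in>{0..1}. g t \<le> 0"
  shows "(\<lambda>j. measure M (path_le M X (\<lambda>t. min (g t + 1 / real (Suc j)) 0))) \<longlonglongrightarrow> measure M (path_le M X g)"
proof -
  interpret prob_space M by (rule M)
  define A where "A j = path_le M X (\<lambda>t. min (g t + 1 / real (Suc j)) 0)" for j
  have "continuous_on UNIV (\<lambda>x. min (x + 1 / real (Suc j)) 0)" for j by (intro continuous_intros)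
  then have "A j \<in> events" for j unfolding A_def by (rule sets_path_le[OF X finite_discontinuities_comp[OF _ g]])
  then have "range A \<subseteq> events" by blast
  moreover have "decseq A"
    unfolding A_def by (intro decseq_SucI path_le_mono min.mono add_left_mono) (simp_all add: frac_le)
  ultimately have "(\<lambda>j. prob (A j)) \<longlonglongrightarrow> prob (\<Inter>j. A j)" by (rule finite_Lim_measure_decseq)
  moreover have "(\<Inter>j. A j) = path_le M X g"
  proof (intro equalityI subsetI)
    fix \<omega> assume \<omega>: "\<omega> \<in> (\<Inter>j. A j)"
    have "X \<omega> t \<le> g t" if t: "t \<in> {0..1}" for t
    proof (rule ccontr)
      assume "\<not> X \<omega> t \<le> g t"
      then obtain j :: nat where j: "inverse (real (Suc j)) < X \<omega> t - g t"
        using reals_Archimedean[of "X \<omega> t - g t"] by auto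
      have "X \<omega> t \<le> min (g t + 1 / real (Suc j)) 0" using \<omega> t unfolding A_def path_le_def by blast
      then show False using j by (simp add: inverse_eq_divide)
    qed
    then show "\<omega> \<in> path_le M X g" using \<omega> unfolding A_def path_le_def by blast
  next
    fix \<omega> assume "\<omega> \<in> path_le M X g"
    then show "\<omega> \<in> (\<Inter>j. A j)"
      using nonpos unfolding A_def path_le_def by (force intro: add_increasing2)
  qed
  ultimately show ?thesis unfolding A_def by simp
qed

lemma tendsto_incseq_of_approx:
  fixes X :: "nat \<Rightarrow> real"
  assumes inc: "incseq X" and le: "\<And>j. X j \<le> a" and approx: "\<And>e. e > 0 \<Longrightarrow> \<exists>j. a - e \<le> X j"
  shows "X \<longlonglongrightarrow> a"
proof (rule tendstoI)
  fix e :: real assume "e > 0"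
  then obtain j where "a - e / 2 \<le> X j" using approx[of "e / 2"] by auto
  then have "dist (X n) a < e" if "n \<ge> j" for n
    using incseqD[OF inc that] le[of n] \<open>e > 0\<close> by (simp add: dist_real_def abs_if)
  then show "\<forall>\<^sub>F n in sequentially. dist (X n) a < e"
    unfolding eventually_sequentially by blast
qed

lemma le_shift_if_le_scaled_and_bounded_away:
  fixes x y \<delta> r k :: real
  assumes k: "k \<ge> 1" and \<delta>: "\<delta> > 0" and scaled: "x \<le> y * ((k + 1) / k)" and away: "x \<le> - \<delta>"
    and r: "r \<le> \<delta> / (2 * k)"
  shows "x \<le> y - r"
proof -
  have "\<delta> / (2 * k) \<le> \<delta> / 2" using k \<delta> by (intro divide_left_mono) auto
  show ?thesis
  proof (cases "y \<ge> - \<delta> / 2")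
    case True
    then show ?thesis using away r \<open>\<delta> / (2 * k) \<le> \<delta> / 2\<close> by linarith
  next
    case False
    have "y * ((k + 1) / k) = y + y / k" using k by (simp add: field_simps)
    moreover have "y / k \<le> - (\<delta> / 2) / k" using False k by (intro divide_right_mono) auto
    ultimately show ?thesis using scaled r by simp
  qed
qed

lemma continuous_on_MAX:
  fixes g :: "'i \<Rightarrow> real \<Rightarrow> real"
  assumes "finite I" "\<forall>i\<in>I. continuous_on S (g i)"
  shows "continuous_on S (\<lambda>t. MAX i\<in>I. g i t)"
proof (cases "I = {}")
  case False
  from assms(1) False assms(2) show ?thesis
  proof (induction I rule: finite_ne_induct)
    case (insert x F)
    have "(\<lambda>t. MAX i\<in>insert x F. g i t) = (\<lambda>t. max (g x t) (MAX i\<in>F. g i t))"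
      using insert by (auto simp: fun_eq_iff)
    then show ?case using insert by (simp add: continuous_on_max)
  qed simp
qed simp

lemma cont_process_MAX:
  assumes "finite I" "\<And>i. i \<in> I \<Longrightarrow> cont_process M (Z i)"
  shows "cont_process M (\<lambda>\<omega> t. MAX i\<in>I. Z i \<omega> t)"
  unfolding cont_process_def
proof (intro conjI ballI)
  fix t :: real assume "t \<in> {0..1}"
  then show "(\<lambda>\<omega>. MAX i\<in>I. Z i \<omega> t) \<in> borel_measurable M"
    using assms by (intro borel_measurable_Max) (auto simp: cont_process_def)
next
  fix \<omega> assume "\<omega> \<in> space M"
  then show "continuous_on {0..1} (\<lambda>t. MAX i\<in>I. Z i \<omega> t)"
    using assms by (intro continuous_on_MAX) (auto simp: cont_process_def)
qed

lemma cont_process_normalize: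
  assumes Y: "cont_process M Y" and a: "continuous_on {0..1} a" "\<forall>t\<in>{0..1}. a t > 0"
    and b: "continuous_on {0..1} b"
  shows "cont_process M (\<lambda>\<omega> t. (Y \<omega> t - b t) / a t)"
  unfolding cont_process_def
proof (intro conjI ballI)
  fix t :: real assume "t \<in> {0..1}"
  then have [measurable]: "(\<lambda>\<omega>. Y \<omega> t) \<in> borel_measurable M" by (rule measurable_path_value[OF Y])
  show "(\<lambda>\<omega>. (Y \<omega> t - b t) / a t) \<in> borel_measurable M" by measurable
next
  fix \<omega> assume "\<omega> \<in> space M"
  then show "continuous_on {0..1} (\<lambda>t. (Y \<omega> t - b t) / a t)"
    using Y a b by (intro continuous_intros) (auto simp: cont_process_def)
qed

lemma path_le_Int_subset_shift:
  fixes k \<delta> r :: real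
  assumes "k \<ge> 1" "\<delta> > 0" "r \<le> \<delta> / (2 * k)" "\<forall>t\<in>{0..1}. h t \<le> - \<delta>"
  shows "path_le M X (\<lambda>t. f t * ((k + 1) / k)) \<inter> path_le M X h \<subseteq> path_le M X (\<lambda>t. f t - r)"
proof
  fix \<omega> assume "\<omega> \<in> path_le M X (\<lambda>t. f t * ((k + 1) / k)) \<inter> path_le M X h"
  then have \<omega>: "\<omega> \<in> space M" "\<forall>t\<in>{0..1}. X \<omega> t \<le> f t * ((k + 1) / k) \<and> X \<omega> t \<le> h t"
    unfolding path_le_def by auto
  have "X \<omega> t \<le> f t - r" if "t \<in> {0..1}" for t
  proof (rule le_shift_if_le_scaled_and_bounded_away[OF assms(1,2) _ _ assms(3)])
    show "X \<omega> t \<le> f t * ((k + 1) / k)" using \<omega>(2) that by blast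
    show "X \<omega> t \<le> - \<delta>" using \<omega>(2) assms(4) that by (meson order_trans)
  qed
  then show "\<omega> \<in> path_le M X (\<lambda>t. f t - r)" using \<omega>(1) unfolding path_le_def by blast
qed

lemma tendsto_root_Suc: "c \<ge> 0 \<Longrightarrow> (\<lambda>j. root (Suc j) c) \<longlonglongrightarrow> (if c = 0 then 0 else 1)"
  using LIMSEQ_root_const[of c] LIMSEQ_Suc by force

lemma E01neg_D:
  assumes "f \<in> E01neg"
  shows "finite (discontinuities f)" "\<forall>t\<in>{0..1}. f t \<le> 0"
  using assms unfolding E01neg_def E01_def discontinuities_def by auto

lemma E01neg_comp:
  assumes f: "f \<in> E01neg" and h: "continuous_on UNIV h"
    and bound: "\<And>x. \<bar>h x\<bar> \<le> \<bar>x\<bar> + C" and nonpos: "\<And>x. x \<le> 0 \<Longrightarrow> h x \<le> 0"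
  shows "(\<lambda>t. h (f t)) \<in> E01neg"
proof -
  obtain B where B: "\<forall>t\<in>{0..1}. \<bar>f t\<bar> \<le> B"
    using f unfolding E01neg_def E01_def bounded_iff by auto
  have "\<bar>h (f t)\<bar> \<le> B + C" if "t \<in> {0..1}" for t using bound[of "f t"] B that by fastforce
  then have "bounded ((\<lambda>t. h (f t)) ` {0..1})" unfolding bounded_iff by (intro exI[of _ "B + C"]) auto
  moreover have "finite (discontinuities (\<lambda>t. h (f t)))"
    by (rule finite_discontinuities_comp[OF h E01neg_D(1)[OF f]])
  ultimately show ?thesis
    using E01neg_D(2)[OF f] nonpos unfolding E01neg_def E01_def discontinuities_def by auto
qed

lemma E01neg_diff_const: "f \<in> E01neg \<Longrightarrow> c \<ge> 0 \<Longrightarrow> (\<lambda>t. f t - c) \<in> E01neg"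
  by (rule E01neg_comp[where C = c]) (auto intro: continuous_intros)

lemma E01neg_min_add_const: "f \<in> E01neg \<Longrightarrow> c \<ge> 0 \<Longrightarrow> (\<lambda>t. min (f t + c) 0) \<in> E01neg"
  by (rule E01neg_comp[where h = "\<lambda>x. min (x + c) 0" and C = c])
    (auto intro: continuous_on_min[OF continuous_on_add[OF continuous_on_id continuous_on_const] continuous_on_const])

lemma E01neg_zero: "(\<lambda>_. 0) \<in> E01neg"
proof -
  have "(\<lambda>_::real. 0::real) ` {0..1} = {0}" by (intro image_constant[of 0]) simp
  then show ?thesis unfolding E01neg_def E01_def by simp
qed

lemma tendsto_path_le_iff_tendsto_path_less:
  fixes X :: "nat \<Rightarrow> 'a \<Rightarrow> real \<Rightarrow> real" and H :: "(real \<Rightarrow> real) \<Rightarrow> real"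
  assumes M: "prob_space M" and X: "\<And>n. cont_process M (X n)"
    and down: "\<And>f. f \<in> E01neg \<Longrightarrow> (\<lambda>j. H (\<lambda>t. f t - 1 / real (Suc j))) \<longlonglongrightarrow> H f"
    and up: "\<And>f. f \<in> E01neg \<Longrightarrow> (\<lambda>j. H (\<lambda>t. min (f t + 1 / real (Suc j)) 0)) \<longlonglongrightarrow> H f"
    and H0: "H (\<lambda>_. 0) = 1"
  shows "(\<forall>f\<in>E01neg. (\<lambda>n. measure M (path_le M (X n) f)) \<longlonglongrightarrow> H f) \<longleftrightarrow>
    (\<forall>f\<in>E01neg. (\<lambda>n. measure M (path_less M (X n) f)) \<longlonglongrightarrow> H f)"
proof -
  interpret prob_space M by (rule M)
  have fin: "finite_measure M" by unfold_locales
  show ?thesis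
  proof (intro iffI ballI)
    fix f assume le: "\<forall>f\<in>E01neg. (\<lambda>n. prob (path_le M (X n) f)) \<longlonglongrightarrow> H f" and f: "f \<in> E01neg"
    show "(\<lambda>n. prob (path_less M (X n) f)) \<longlonglongrightarrow> H f"
    proof (rule tendsto_of_approximating_bounds[where B = "\<lambda>_. H f"])
      show "prob (path_le M (X n) (\<lambda>t. f t - 1 / real (Suc j))) \<le> prob (path_less M (X n) f)" for j n
        by (rule measure_path_le_shift_le_path_less[OF fin X E01neg_D(1)[OF f]]) simp
      show "prob (path_less M (X n) f) \<le> prob (path_le M (X n) f)" for n
        by (rule measure_path_less_le_path_le[OF fin X E01neg_D(1)[OF f]])
      show "(\<lambda>n. prob (path_le M (X n) (\<lambda>t. f t - 1 / real (Suc j)))) \<longlonglongrightarrow> H (\<lambda>t. f t - 1 / real (Suc j))" for j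
        using le E01neg_diff_const[OF f] by simp
    qed (use le f down[OF f] in auto)
  next
    fix f assume less: "\<forall>f\<in>E01neg. (\<lambda>n. prob (path_less M (X n) f)) \<longlonglongrightarrow> H f" and f: "f \<in> E01neg"
    define f' where "f' j = (\<lambda>t. min (f t + 1 / real (Suc j)) 0)" for j
    show "(\<lambda>n. prob (path_le M (X n) f)) \<longlonglongrightarrow> H f"
    proof (rule tendsto_of_approximating_bounds[where A = "\<lambda>_. H f"])
      show "prob (path_less M (X n) f) \<le> prob (path_le M (X n) f)" for j n
        by (rule measure_path_less_le_path_le[OF fin X E01neg_D(1)[OF f]])
      show "prob (path_le M (X n) f) \<le> prob (path_less M (X n) (f' j)) + (1 - prob (path_less M (X n) (\<lambda>_. 0)))"
        for j n unfolding f'_def by (rule measure_path_le_le_path_less_shift[OF M X E01neg_D(1)[OF f]]) simp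
      show "(\<lambda>n. prob (path_less M (X n) (f' j)) + (1 - prob (path_less M (X n) (\<lambda>_. 0))))
          \<longlonglongrightarrow> H (f' j) + (1 - H (\<lambda>_. 0))" for j
        unfolding f'_def using less E01neg_min_add_const[OF f] E01neg_zero by (intro tendsto_intros) auto
      show "(\<lambda>j. H (f' j) + (1 - H (\<lambda>_. 0))) \<longlonglongrightarrow> H f"
        unfolding f'_def H0 using up[OF f] by simp
    qed (use less f in auto)
  qed
qed

lemma measurable_path_restrict:
  "cont_process N \<eta> \<Longrightarrow> (\<lambda>\<omega>. restrict (\<eta> \<omega>) {0..1}) \<in> measurable N P01"
  by (intro measurable_restrict) (auto simp: cont_process_def)

lemma sets_P01_le_on_countable:
  assumes S: "S \<subseteq> {0..1}" "countable S"
  shows "{x \<in> space P01. \<forall>t\<in>S. x t \<le> h t} \<in> sets P01"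
proof (rule sets.sets_Collect_countable_All'[OF _ S(2)])
  fix t assume "t \<in> S"
  then have [measurable]: "(\<lambda>x. x t) \<in> borel_measurable P01"
    using S(1) by (intro measurable_component_singleton) auto
  show "{x \<in> space P01. x t \<le> h t} \<in> sets P01" by measurable
qed

lemma measure_path_law_le_on:
  assumes X: "cont_process N \<eta>" and S: "S \<subseteq> {0..1}" "countable S"
  shows "measure (path_law N \<eta>) {x \<in> space P01. \<forall>t\<in>S. x t \<le> h t} =
    measure N {\<omega> \<in> space N. \<forall>t\<in>S. \<eta> \<omega> t \<le> h t}"
proof -
  have "measure (path_law N \<eta>) {x \<in> space P01. \<forall>t\<in>S. x t \<le> h t} =
      measure N ((\<lambda>\<omega>. restrict (\<eta> \<omega>) {0..1}) -` {x \<in> space P01. \<forall>t\<in>S. x t \<le> h t} \<inter> space N)"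
    unfolding path_law_def
    by (rule measure_distr[OF measurable_path_restrict[OF X] sets_P01_le_on_countable[OF S]])
  also have "(\<lambda>\<omega>. restrict (\<eta> \<omega>) {0..1}) -` {x \<in> space P01. \<forall>t\<in>S. x t \<le> h t} \<inter> space N =
      {\<omega> \<in> space N. \<forall>t\<in>S. \<eta> \<omega> t \<le> h t}"
    using S(1) by (auto simp: space_PiM)
  finally show ?thesis .
qed

lemma normalized_max_preimage:
  fixes n :: nat
  assumes S: "S \<subseteq> {0..1}" and n: "n \<ge> 1" and \<alpha>: "\<forall>t\<in>{0..1}. \<alpha> t > 0"
  shows "(\<lambda>gs. \<lambda>t\<in>{0..1}. MAX i\<in>{..<n}. (gs i t - \<beta> t) / \<alpha> t) -` {x \<in> space P01. \<forall>t\<in>S. x t \<le> g t}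
      \<inter> PiE {..<n} (\<lambda>_. space P01) =
    PiE {..<n} (\<lambda>_. {x \<in> space P01. \<forall>t\<in>S. x t \<le> \<alpha> t * g t + \<beta> t})"
proof -
  let ?mx = "\<lambda>gs. \<lambda>t\<in>{0..1}. MAX i\<in>{..<n}. (gs i t - \<beta> t) / \<alpha> t"
  let ?A = "\<lambda>h. {x \<in> space P01. \<forall>t\<in>S. x t \<le> h t}"
  let ?h = "\<lambda>t. \<alpha> t * g t + \<beta> t"
  let ?PP = "PiE {..<n} (\<lambda>_. space P01)"
  have key: "?mx gs \<in> ?A g \<longleftrightarrow> (\<forall>i\<in>{..<n}. gs i \<in> ?A ?h)" if gs: "gs \<in> ?PP" for gs
  proof -
    have "(gs i t - \<beta> t) / \<alpha> t \<le> g t \<longleftrightarrow> gs i t \<le> \<alpha> t * g t + \<beta> t" if "t \<in> S" for t i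
      using \<alpha> S that by (simp add: pos_divide_le_eq algebra_simps subset_iff)
    moreover have "{..<n} \<noteq> {}" using n by (simp add: lessThan_empty_iff)
    moreover have "?mx gs \<in> space P01" by (simp add: space_PiM)
    ultimately show ?thesis
      using gs S by (auto simp: space_PiM Max_le_iff PiE_iff subset_iff)
  qed
  show ?thesis
  proof (intro set_eqI iffI)
    fix gs assume gs: "gs \<in> ?mx -` ?A g \<inter> ?PP"
    then have "\<forall>i\<in>{..<n}. gs i \<in> ?A ?h" using key by blast
    then show "gs \<in> PiE {..<n} (\<lambda>_. ?A ?h)" using gs by (simp add: PiE_iff)
  next
    fix gs assume gs: "gs \<in> PiE {..<n} (\<lambda>_. ?A ?h)"
    then have "gs \<in> ?PP" by (simp add: PiE_iff)
    then show "gs \<in> ?mx -` ?A g \<inter> ?PP" using key gs by (simp add: PiE_iff)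
  qed
qed

lemma max_stable_prob_power:
  fixes \<eta> :: "'b \<Rightarrow> real \<Rightarrow> real"
  assumes N: "prob_space N" and X: "cont_process N \<eta>" and S: "S \<subseteq> {0..1}" "countable S"
    and n: "n \<ge> 1" and \<alpha>: "\<forall>t\<in>{0..1}. \<alpha> t > 0"
    and stable: "distr (PiM {..<n} (\<lambda>_. path_law N \<eta>)) P01
       (\<lambda>gs. \<lambda>t\<in>{0..1}. MAX i\<in>{..<n}. (gs i t - \<beta> t) / \<alpha> t) = path_law N \<eta>"
  shows "measure N {\<omega> \<in> space N. \<forall>t\<in>S. \<eta> \<omega> t \<le> g t} =
    measure N {\<omega> \<in> space N. \<forall>t\<in>S. \<eta> \<omega> t \<le> \<alpha> t * g t + \<beta> t} ^ n"
proof -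
  define \<mu> where "\<mu> = path_law N \<eta>"
  define A where "A h = {x \<in> space P01. \<forall>t\<in>S. x t \<le> h t}" for h :: "real \<Rightarrow> real"
  define PP where "PP = PiM {..<n} (\<lambda>_. \<mu>)"
  define mx where "mx = (\<lambda>gs. \<lambda>t\<in>{0..1}. MAX i\<in>{..<n}. (gs i t - \<beta> t) / \<alpha> t)"
  have r: "(\<lambda>\<omega>. restrict (\<eta> \<omega>) {0..1}) \<in> measurable N P01" by (rule measurable_path_restrict[OF X])
  have sets_\<mu>: "sets \<mu> = sets P01" and space_\<mu>: "space \<mu> = space P01"
    unfolding \<mu>_def path_law_def by simp_all
  have A: "A h \<in> sets P01" for h unfolding A_def by (rule sets_P01_le_on_countable[OF S])
  have \<mu>_A: "measure \<mu> (A h) = measure N {\<omega> \<in> space N. \<forall>t\<in>S. \<eta> \<omega> t \<le> h t}" for h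
    unfolding \<mu>_def A_def by (rule measure_path_law_le_on[OF X S])
  interpret P: finite_product_prob_space "\<lambda>_. \<mu>" "{..<n}"
    using prob_space.prob_space_distr[OF N r]
    by (intro finite_product_prob_space.intro finite_product_sigma_finite.intro product_prob_spaceI
        finite_product_sigma_finite_axioms.intro product_prob_space.axioms(1)) (auto simp: \<mu>_def path_law_def)
  have mx: "mx \<in> measurable PP P01" unfolding mx_def PP_def
  proof (rule measurable_restrict)
    fix t :: real assume t: "t \<in> {0..1}"
    have [measurable]: "(\<lambda>x. x t) \<in> borel_measurable \<mu>"
      using t by (subst measurable_cong_sets[OF sets_\<mu> refl]) (intro measurable_component_singleton)
    show "(\<lambda>gs. MAX i\<in>{..<n}. (gs i t - \<beta> t) / \<alpha> t) \<in> borel_measurable (PiM {..<n} (\<lambda>_. \<mu>))"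
      by (intro borel_measurable_Max) auto
  qed
  have "space PP = PiE {..<n} (\<lambda>_. space P01)" unfolding PP_def by (simp add: space_PiM space_\<mu>)
  then have preimage: "mx -` A g \<inter> space PP = PiE {..<n} (\<lambda>_. A (\<lambda>t. \<alpha> t * g t + \<beta> t))"
    unfolding mx_def A_def by (simp only: normalized_max_preimage[OF S(1) n \<alpha>])
  have "measure \<mu> (A g) = measure (distr PP P01 mx) (A g)"
    using stable unfolding \<mu>_def mx_def PP_def by simp
  also have "\<dots> = measure PP (PiE {..<n} (\<lambda>_. A (\<lambda>t. \<alpha> t * g t + \<beta> t)))"
    by (subst measure_distr[OF mx A]) (simp add: preimage)
  also have "\<dots> = measure \<mu> (A (\<lambda>t. \<alpha> t * g t + \<beta> t)) ^ n"
    unfolding PP_def using A sets_\<mu> by (subst P.prob_times) auto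
  finally show ?thesis unfolding \<mu>_A .
qed

locale std_max_stable_process =
  fixes N :: "'b measure" and \<eta> :: "'b \<Rightarrow> real \<Rightarrow> real"
  assumes std_max_stable: "std_max_stable N \<eta>"
begin

sublocale prob_space N
  using std_max_stable by (simp add: std_max_stable_def)

lemma cont_process: "cont_process N \<eta>"
  using std_max_stable by (simp add: std_max_stable_def)

lemma nonpos: "\<omega> \<in> space N \<Longrightarrow> t \<in> {0..1} \<Longrightarrow> \<eta> \<omega> t \<le> 0"
  using std_max_stable by (simp add: std_max_stable_def)

lemma continuous_path: "\<omega> \<in> space N \<Longrightarrow> continuous_on {0..1} (\<eta> \<omega>)"
  using cont_process by (simp add: cont_process_def)

definition fdf :: "(real \<Rightarrow> real) \<Rightarrow> real" where
  "fdf g = measure N (path_le N \<eta> g)"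

lemma margin:
  assumes "t \<in> {0..1}"
  shows "measure N {\<omega> \<in> space N. \<eta> \<omega> t \<le> x} = (if x \<le> 0 then exp x else 1)"
proof (cases "x \<le> 0")
  case False
  then have "\<eta> \<omega> t \<le> x" if "\<omega> \<in> space N" for \<omega> using nonpos[OF that assms] by linarith
  then have "{\<omega> \<in> space N. \<eta> \<omega> t \<le> x} = space N" by auto
  then show ?thesis using False prob_space by simp
qed (use std_max_stable assms in \<open>simp add: std_max_stable_def\<close>)

lemma norming_functions:
  fixes n :: nat
  assumes "n \<ge> 1"
  obtains \<alpha> \<beta> where "\<forall>t\<in>{0..1}. \<alpha> t > 0"
    "distr (PiM {..<n} (\<lambda>_. path_law N \<eta>)) P01
       (\<lambda>gs. \<lambda>t\<in>{0..1}. MAX i\<in>{..<n}. (gs i t - \<beta> t) / \<alpha> t) = path_law N \<eta>"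
proof -
  have "\<forall>n::nat. n \<ge> 1 \<longrightarrow> (\<exists>\<alpha> \<beta>. continuous_on {0..1} \<alpha> \<and> (\<forall>t\<in>{0..1}. \<alpha> t > 0) \<and>
        continuous_on {0..1} \<beta> \<and>
        distr (PiM {..<n} (\<lambda>_. path_law N \<eta>)) P01
          (\<lambda>gs. \<lambda>t\<in>{0..1}. (MAX i\<in>{..<n}. (gs i t - \<beta> t) / \<alpha> t)) = path_law N \<eta>)"
    using std_max_stable unfolding std_max_stable_def by (elim conjE) assumption
  then show thesis using assms that by blast
qed

lemma norming_constants:
  assumes n: "n \<ge> 1" and \<alpha>: "\<forall>t\<in>{0..1}. \<alpha> t > 0"
    and stable: "distr (PiM {..<n} (\<lambda>_. path_law N \<eta>)) P01
       (\<lambda>gs. \<lambda>t\<in>{0..1}. MAX i\<in>{..<n}. (gs i t - \<beta> t) / \<alpha> t) = path_law N \<eta>"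
    and t: "t \<in> {0..1}"
  shows "\<alpha> t = 1 / real n" "\<beta> t = 0"
proof -
  have margin_eq: "x = real n * (\<alpha> t * x + \<beta> t)" if "x < 0" for x
  proof -
    let ?y = "\<alpha> t * x + \<beta> t"
    have "measure N {\<omega> \<in> space N. \<forall>s\<in>{t}. \<eta> \<omega> s \<le> x} =
        measure N {\<omega> \<in> space N. \<forall>s\<in>{t}. \<eta> \<omega> s \<le> \<alpha> s * x + \<beta> s} ^ n"
      using t by (intro max_stable_prob_power[where g = "\<lambda>_. x", OF prob_space_axioms cont_process _ _ n \<alpha> stable]) auto
    then have exp_x: "exp x = (if ?y \<le> 0 then exp ?y else 1) ^ n"
      using margin[OF t] that by simp
    then have "?y \<le> 0" using that by (cases "?y \<le> 0") auto
    then have "exp x = exp (real n * ?y)" using exp_x by (simp add: exp_of_nat_mult)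
    then show ?thesis by simp
  qed
  from margin_eq[of "-1"] have e1: "real n * \<alpha> t - real n * \<beta> t = 1" by (simp add: algebra_simps)
  from margin_eq[of "-2"] have e2: "2 * (real n * \<alpha> t) - real n * \<beta> t = 2" by (simp add: algebra_simps)
  have "real n * \<alpha> t = 1" "real n * \<beta> t = 0" using e1 e2 by linarith+
  then show "\<alpha> t = 1 / real n" "\<beta> t = 0" using n by (simp_all add: field_simps)
qed

lemma power_on_countable:
  assumes S: "S \<subseteq> {0..1}" "countable S" and n: "n \<ge> 1"
  shows "measure N {\<omega> \<in> space N. \<forall>t\<in>S. \<eta> \<omega> t \<le> g t} =
    measure N {\<omega> \<in> space N. \<forall>t\<in>S. \<eta> \<omega> t \<le> g t / real n} ^ n"
proof -
  obtain \<alpha> \<beta> where \<alpha>: "\<forall>t\<in>{0..1}. \<alpha> t > 0"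
    and stable: "distr (PiM {..<n} (\<lambda>_. path_law N \<eta>)) P01
       (\<lambda>gs. \<lambda>t\<in>{0..1}. MAX i\<in>{..<n}. (gs i t - \<beta> t) / \<alpha> t) = path_law N \<eta>"
    by (rule norming_functions[OF n])
  have "\<alpha> t * g t + \<beta> t = g t / real n" if "t \<in> S" for t
    using norming_constants[OF n \<alpha> stable] that S(1) by auto
  then have "{\<omega> \<in> space N. \<forall>t\<in>S. \<eta> \<omega> t \<le> \<alpha> t * g t + \<beta> t} = {\<omega> \<in> space N. \<forall>t\<in>S. \<eta> \<omega> t \<le> g t / real n}"
    by (intro Collect_cong conj_cong ball_cong refl) simp
  moreover note max_stable_prob_power[OF prob_space_axioms cont_process S n \<alpha> stable, of g]
  ultimately show ?thesis by (simp only:)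
qed

lemma fdf_power:
  assumes D: "finite (discontinuities g)" and n: "n \<ge> 1"
  shows "fdf g = fdf (\<lambda>t. g t / real n) ^ n"
proof -
  let ?S = "\<rat> \<inter> {0..1} \<union> discontinuities g"
  have S: "?S \<subseteq> {0..1}" "countable ?S"
    using discontinuities_subset countable_rationals_and_discontinuities[OF D] by auto
  have "continuous_on UNIV (\<lambda>x. x / real n)" using n by (intro continuous_intros) simp
  then have "discontinuities (\<lambda>t. g t / real n) \<subseteq> ?S"
    using discontinuities_comp[of "\<lambda>x. x / real n" g] by blast
  then have "path_le N \<eta> (\<lambda>t. g t / real n) = {\<omega> \<in> space N. \<forall>t\<in>?S. \<eta> \<omega> t \<le> g t / real n}"
    by (rule path_le_eq_le_on_dense[OF cont_process Un_upper1 _ S(1)])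
  moreover have "path_le N \<eta> g = {\<omega> \<in> space N. \<forall>t\<in>?S. \<eta> \<omega> t \<le> g t}"
    by (rule path_le_eq_le_on_dense[OF cont_process Un_upper1 Un_upper2 S(1)])
  ultimately show ?thesis unfolding fdf_def by (simp only: power_on_countable[OF S n, of g])
qed

lemma fdf_nonneg: "0 \<le> fdf g"
  by (simp add: fdf_def)

lemma fdf_scaled_root:
  assumes "finite (discontinuities g)" "n \<ge> 1"
  shows "fdf (\<lambda>t. g t / real n) = root n (fdf g)"
  using fdf_power[OF assms] assms(2) fdf_nonneg by (simp add: real_root_power_cancel)

definition zero_upto :: "real \<Rightarrow> 'b set" where
  "zero_upto s = {\<omega> \<in> space N. \<exists>t\<in>{0..s}. \<eta> \<omega> t = 0}"

lemma path_le_step_iff: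
  assumes "s \<in> {0..1}" "c \<le> 0"
  shows "\<omega> \<in> path_le N \<eta> (\<lambda>t. if t \<le> s then c else 0) \<longleftrightarrow> \<omega> \<in> space N \<and> (\<forall>t\<in>{0..s}. \<eta> \<omega> t \<le> c)"
  using assms nonpos unfolding path_le_def by force

lemma UN_path_le_step:
  assumes s: "s \<in> {0..1}"
  shows "(\<Union>j. path_le N \<eta> (\<lambda>t. if t \<le> s then -1 / real (Suc j) else 0)) = space N - zero_upto s"
proof (intro equalityI subsetI)
  fix \<omega> assume "\<omega> \<in> (\<Union>j. path_le N \<eta> (\<lambda>t. if t \<le> s then -1 / real (Suc j) else 0))"
  then obtain j where "\<omega> \<in> space N" "\<forall>t\<in>{0..s}. \<eta> \<omega> t \<le> -1 / real (Suc j)"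
    using path_le_step_iff[OF s] by auto
  moreover have "-1 / real (Suc j) < 0" by simp
  ultimately have "\<eta> \<omega> t \<noteq> 0" if "t \<in> {0..s}" for t using that by fastforce
  then show "\<omega> \<in> space N - zero_upto s" using \<open>\<omega> \<in> space N\<close> unfolding zero_upto_def by blast
next
  fix \<omega> assume \<omega>: "\<omega> \<in> space N - zero_upto s"
  have "continuous_on {0..s} (\<eta> \<omega>)"
    using continuous_path[of \<omega>] \<omega> s by (auto intro: continuous_on_subset)
  moreover have "{0..s} \<noteq> {}" using s by simp
  ultimately obtain u where u: "u \<in> {0..s}" "\<forall>t\<in>{0..s}. \<eta> \<omega> t \<le> \<eta> \<omega> u"
    using continuous_attains_sup[OF compact_Icc] by blast
  have "\<eta> \<omega> u \<noteq> 0" using \<omega> u(1) unfolding zero_upto_def by blast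
  moreover have "\<eta> \<omega> u \<le> 0" using nonpos[of \<omega> u] \<omega> u(1) s by simp
  ultimately have "\<eta> \<omega> u < 0" by simp
  then obtain j :: nat where "inverse (real (Suc j)) < - \<eta> \<omega> u"
    using reals_Archimedean[of "- \<eta> \<omega> u"] by auto
  then have "\<eta> \<omega> u \<le> -1 / real (Suc j)" by (simp add: inverse_eq_divide)
  then have "\<forall>t\<in>{0..s}. \<eta> \<omega> t \<le> -1 / real (Suc j)" using u(2) by (meson order_trans)
  then show "\<omega> \<in> (\<Union>j. path_le N \<eta> (\<lambda>t. if t \<le> s then -1 / real (Suc j) else 0))"
    using path_le_step_iff[OF s] \<omega> by auto
qed

lemma sets_path_le_step: "path_le N \<eta> (\<lambda>t. if t \<le> s then c else 0) \<in> sets N"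
  by (rule sets_path_le[OF cont_process finite_discontinuities_step])

lemma sets_zero_upto:
  assumes "s \<in> {0..1}"
  shows "zero_upto s \<in> sets N"
proof -
  have "zero_upto s = space N - (\<Union>j. path_le N \<eta> (\<lambda>t. if t \<le> s then -1 / real (Suc j) else 0))"
    using UN_path_le_step[OF assms] unfolding zero_upto_def by auto
  then show ?thesis using sets_path_le_step by auto
qed

lemma tendsto_fdf_step:
  assumes s: "s \<in> {0..1}"
  shows "(\<lambda>j. fdf (\<lambda>t. if t \<le> s then -1 / real (Suc j) else 0)) \<longlonglongrightarrow> 1 - prob (zero_upto s)"
proof -
  have "(\<lambda>j. prob (path_le N \<eta> (\<lambda>t. if t \<le> s then -1 / real (Suc j) else 0)))
      \<longlonglongrightarrow> prob (space N - zero_upto s)"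
    unfolding UN_path_le_step[OF s, symmetric]
    by (intro finite_Lim_measure_incseq incseq_SucI path_le_mono) (auto simp: sets_path_le_step frac_le)
  then show ?thesis unfolding fdf_def by (simp add: prob_compl sets_zero_upto[OF s])
qed

(* By max-stability P(\<eta> \<le> -1/(j+1) on [0,s]) is the (j+1)-th root of P(\<eta> \<le> -1 on [0,s]). *)
lemma prob_zero_upto_0_or_1:
  assumes s: "s \<in> {0..1}"
  shows "prob (zero_upto s) = 0 \<or> prob (zero_upto s) = 1"
proof -
  define c where "c = fdf (\<lambda>t. if t \<le> s then -1 else 0)"
  have "fdf (\<lambda>t. if t \<le> s then -1 / real (Suc j) else 0) = root (Suc j) c" for j
  proof -
    have "(\<lambda>t. if t \<le> s then -1 / real (Suc j) else 0) = (\<lambda>t. (if t \<le> s then -1 else 0) / real (Suc j))"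
      by auto
    then show ?thesis unfolding c_def by (simp add: fdf_scaled_root finite_discontinuities_step del: of_nat_Suc)
  qed
  with tendsto_fdf_step[OF s] have "(\<lambda>j. root (Suc j) c) \<longlonglongrightarrow> 1 - prob (zero_upto s)" by simp
  moreover have "(\<lambda>j. root (Suc j) c) \<longlonglongrightarrow> (if c = 0 then 0 else 1)"
    by (rule tendsto_root_Suc) (simp add: c_def fdf_nonneg)
  ultimately have "1 - prob (zero_upto s) = (if c = 0 then 0 else 1)" by (rule LIMSEQ_unique)
  then show ?thesis by (cases "c = 0") simp_all
qed

lemma zero_upto_mono: "s \<le> s' \<Longrightarrow> zero_upto s \<subseteq> zero_upto s'"
  unfolding zero_upto_def by auto

lemma zero_upto_if_zero_upto_right:
  assumes c: "c < 1" and \<omega>: "\<omega> \<in> space N"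
    and zeros: "\<forall>k. \<omega> \<in> zero_upto (c + (1 - c) / real (Suc k))"
  shows "\<omega> \<in> zero_upto c"
proof -
  define Z where "Z = {t \<in> {0..1}. \<eta> \<omega> t = 0}"
  have "closed Z" unfolding Z_def
    by (rule continuous_closed_preimage_constant[OF continuous_path[OF \<omega>]]) simp
  have "\<exists>t\<in>Z. t \<le> c + (1 - c) / real (Suc k)" for k
  proof -
    obtain t where "t \<in> {0..c + (1 - c) / real (Suc k)}" "\<eta> \<omega> t = 0"
      using zeros unfolding zero_upto_def by blast
    moreover have "(1 - c) / real (Suc k) \<le> 1 - c" using c by (simp add: divide_le_eq)
    ultimately show ?thesis unfolding Z_def by auto
  qed
  then have "Z \<noteq> {}" by blast
  have "bdd_below Z" unfolding Z_def by (rule bdd_belowI[of _ 0]) auto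
  define i where "i = Inf Z"
  have "i \<in> Z" unfolding i_def by (rule closed_contains_Inf) fact+
  have "i \<le> c + (1 - c) / real (Suc k)" for k
    using \<open>\<exists>t\<in>Z. t \<le> c + (1 - c) / real (Suc k)\<close> cInf_lower[OF _ \<open>bdd_below Z\<close>]
    unfolding i_def by (meson order_trans)
  have "i \<le> c"
  proof (rule ccontr)
    assume "\<not> i \<le> c"
    then obtain k :: nat where "inverse (real (Suc k)) < (i - c) / (1 - c)"
      using reals_Archimedean[of "(i - c) / (1 - c)"] c by auto
    then have "c + (1 - c) / real (Suc k) < i" using c by (simp add: inverse_eq_divide field_simps)
    then show False using \<open>\<And>k. i \<le> c + (1 - c) / real (Suc k)\<close> by (meson not_le)
  qed
  then show ?thesis using \<open>i \<in> Z\<close> \<omega> unfolding Z_def zero_upto_def by auto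
qed

lemma zero_at_if_no_earlier_zero:
  assumes c: "c > 0" and zero: "\<omega> \<in> zero_upto c"
    and earlier: "\<forall>k. \<omega> \<notin> zero_upto (c - c / real (Suc (Suc k)))"
  shows "\<eta> \<omega> c = 0"
proof -
  obtain t where t: "t \<in> {0..c}" "\<eta> \<omega> t = 0" using zero unfolding zero_upto_def by auto
  have "t = c"
  proof (rule ccontr)
    assume "t \<noteq> c"
    then obtain k :: nat where "inverse (real (Suc k)) < (c - t) / c"
      using reals_Archimedean[of "(c - t) / c"] t c by auto
    then have "c / real (Suc k) < c - t" using c by (simp add: inverse_eq_divide field_simps)
    moreover have "c / real (Suc (Suc k)) \<le> c / real (Suc k)" using c by (intro divide_left_mono) auto
    ultimately have "t \<le> c - c / real (Suc (Suc k))" by linarith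
    then have "\<omega> \<in> zero_upto (c - c / real (Suc (Suc k)))"
      using zero t unfolding zero_upto_def by auto
    then show False using earlier by blast
  qed
  then show ?thesis using t by simp
qed

lemma AE_zero_upto_if_prob_right:
  assumes c: "c < 1" and right: "\<And>s. c < s \<Longrightarrow> s \<le> 1 \<Longrightarrow> prob (zero_upto s) = 1"
  shows "AE \<omega> in N. \<omega> \<in> zero_upto c"
proof -
  have "c + (1 - c) / real (Suc k) \<le> 1" for k
  proof -
    have "(1 - c) / real (Suc k) \<le> 1 - c" using c by (simp add: divide_le_eq)
    then show ?thesis by linarith
  qed
  then have "AE \<omega> in N. \<forall>k. \<omega> \<in> zero_upto (c + (1 - c) / real (Suc k))"
    unfolding AE_all_countable using c by (intro allI AE_prob_1 right) auto
  then show ?thesis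
    by (rule AE_mp) (use zero_upto_if_zero_upto_right[OF c] in \<open>auto intro!: AE_I2\<close>)
qed

lemma AE_zero_at_if_prob_left:
  assumes c: "0 < c" "c \<le> 1" and left: "\<And>s. 0 \<le> s \<Longrightarrow> s < c \<Longrightarrow> prob (zero_upto s) = 0"
    and zero: "AE \<omega> in N. \<omega> \<in> zero_upto c"
  shows "AE \<omega> in N. \<eta> \<omega> c = 0"
proof -
  have "AE \<omega> in N. \<omega> \<notin> zero_upto (c - c / real (Suc (Suc k)))" for k
  proof (rule AE_not_in)
    define s where "s = c - c / real (Suc (Suc k))"
    have "c / real (Suc (Suc k)) \<le> c" "c / real (Suc (Suc k)) > 0"
      using c by (simp_all add: divide_le_eq)
    then have "0 \<le> s" "s < c" unfolding s_def by simp_all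
    then have "prob (zero_upto s) = 0" "zero_upto s \<in> events"
      using left c(2) by (auto intro: sets_zero_upto)
    then show "zero_upto (c - c / real (Suc (Suc k))) \<in> null_sets N"
      unfolding s_def by (simp add: null_sets_def emeasure_eq_measure)
  qed
  then have "AE \<omega> in N. \<forall>k. \<omega> \<notin> zero_upto (c - c / real (Suc (Suc k)))"
    unfolding AE_all_countable ..
  with zero show ?thesis
    by eventually_elim (use zero_at_if_no_earlier_zero[OF c(1)] in blast)
qed

(* With c the infimum of the s for which zero_upto s is almost sure, almost every path has a
   zero in [0,c] but none in [0,s] for s < c. *)
lemma AE_zero_at_some_point:
  assumes one: "prob (zero_upto 1) = 1"
  obtains c where "c \<in> {0..1}" "AE \<omega> in N. \<eta> \<omega> c = 0"
proof -
  define T where "T = {s \<in> {0..1}. prob (zero_upto s) = 1}"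
  define c where "c = Inf T"
  have "1 \<in> T" using one unfolding T_def by simp
  have "bdd_below T" unfolding T_def by (rule bdd_belowI[of _ 0]) auto
  have "T \<noteq> {}" using \<open>1 \<in> T\<close> by blast
  have "0 \<le> c" unfolding c_def by (rule cInf_greatest[OF \<open>T \<noteq> {}\<close>]) (simp add: T_def)
  moreover have "c \<le> 1" unfolding c_def by (rule cInf_lower[OF \<open>1 \<in> T\<close> \<open>bdd_below T\<close>])
  ultimately have c: "0 \<le> c" "c \<le> 1" .
  have right: "prob (zero_upto s) = 1" if "c < s" "s \<le> 1" for s
  proof -
    have "\<exists>s'\<in>T. s' < s"
      using that(1) cInf_less_iff[OF \<open>T \<noteq> {}\<close> \<open>bdd_below T\<close>] unfolding c_def by simp
    then obtain s' where "s' \<in> T" "s' < s" ..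
    then have "prob (zero_upto s') \<le> prob (zero_upto s)"
      using that c by (intro finite_measure_mono zero_upto_mono sets_zero_upto) auto
    then show ?thesis using \<open>s' \<in> T\<close> unfolding T_def by (simp add: antisym)
  qed
  have left: "prob (zero_upto s) = 0" if "0 \<le> s" "s < c" for s
  proof -
    have "s \<notin> T" using cInf_lower[OF _ \<open>bdd_below T\<close>, of s] that(2) unfolding c_def by linarith
    then show ?thesis using prob_zero_upto_0_or_1[of s] that c unfolding T_def by auto
  qed
  have zero: "AE \<omega> in N. \<omega> \<in> zero_upto c"
  proof (cases "c \<in> T")
    case True
    then show ?thesis unfolding T_def by (intro AE_prob_1) simp
  next
    case False
    then have "c < 1" using \<open>1 \<in> T\<close> c(2) by (metis order_le_less)
    then show ?thesis using right by (rule AE_zero_upto_if_prob_right)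
  qed
  have "AE \<omega> in N. \<eta> \<omega> c = 0"
  proof (cases "c = 0")
    case True
    show ?thesis using zero by (rule AE_mp) (auto simp: True zero_upto_def intro!: AE_I2)
  next
    case False
    then show ?thesis using c left zero by (intro AE_zero_at_if_prob_left) auto
  qed
  with c that show thesis by simp
qed

lemma prob_zero_upto_1: "prob (zero_upto 1) = 0"
proof (rule ccontr)
  assume "prob (zero_upto 1) \<noteq> 0"
  then obtain c where c: "c \<in> {0..1}" and zero: "AE \<omega> in N. \<eta> \<omega> c = 0"
    using AE_zero_at_some_point prob_zero_upto_0_or_1[of 1] by auto
  from zero have "AE \<omega> in N. \<not> \<eta> \<omega> c \<le> -1" by eventually_elim simp
  then have "prob {\<omega> \<in> space N. \<eta> \<omega> c \<le> -1} = 0" by (rule prob_eq_0_AE)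
  then show False using margin[OF c, of "-1"] by simp
qed

lemma fdf_zero: "fdf (\<lambda>_. 0) = 1"
proof -
  have "path_le N \<eta> (\<lambda>_. 0) = space N" using nonpos unfolding path_le_def by auto
  then show ?thesis unfolding fdf_def by (simp add: prob_space)
qed

lemma fdf_mult_Suc_div:
  assumes f: "finite (discontinuities f)" and k: "k \<ge> 1"
  shows "fdf (\<lambda>t. f t * ((real k + 1) / real k)) = fdf f * root k (fdf f)"
proof -
  have "continuous_on UNIV (\<lambda>x. x * ((real k + 1) / real k))" by (intro continuous_intros)
  from finite_discontinuities_comp[OF this f]
  have "fdf (\<lambda>t. f t * ((real k + 1) / real k)) =
      fdf (\<lambda>t. f t * ((real k + 1) / real k) / real (Suc k)) ^ Suc k"
    by (rule fdf_power) simp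
  also have "(\<lambda>t. f t * ((real k + 1) / real k) / real (Suc k)) = (\<lambda>t. f t / real k)"
    by (simp add: fun_eq_iff add.commute)
  also have "fdf \<dots> ^ Suc k = root k (fdf f) ^ k * root k (fdf f)"
    by (simp add: fdf_scaled_root[OF f k] mult.commute)
  also have "root k (fdf f) ^ k = fdf f" using k fdf_nonneg by simp
  finally show ?thesis .
qed

(* fdf ((1 + 1/k) f) = fdf f ^ (1 + 1/k) is close to fdf f, and on the likely event \<eta> \<le> -\<delta>
   the bound \<eta> \<le> (1 + 1/k) f already forces \<eta> \<le> f - 1/(j+1). *)
lemma fdf_shift_down_approx:
  assumes f: "finite (discontinuities f)" and e: "e > 0"
  shows "\<exists>j. fdf f - e \<le> fdf (\<lambda>t. f t - 1 / real (Suc j))"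
proof (cases "fdf f = 0")
  case True
  have "fdf f - e \<le> fdf (\<lambda>t. f t - 1 / real (Suc 0))"
    using True e fdf_nonneg[of "\<lambda>t. f t - 1 / real (Suc 0)"] by linarith
  then show ?thesis ..
next
  case False
  define a where "a = fdf f"
  have "0 \<le> a" "a \<noteq> 0" using False unfolding a_def by (simp_all add: fdf_nonneg)
  moreover have "a \<le> 1" unfolding a_def fdf_def by (rule prob_le_1)
  ultimately have a: "0 < a" "a \<le> 1" by simp_all
  from order_tendstoD(1)[OF LIMSEQ_root_const[OF a(1)], of "1 - e / 2"] e
  obtain k0 where "\<forall>k\<ge>k0. 1 - e / 2 < root k a" unfolding eventually_sequentially by auto
  then obtain k where k: "k \<ge> 1" "1 - e / 2 \<le> root k a" by (intro that[of "Suc k0"]) (auto intro: less_imp_le)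
  have "(\<lambda>j. fdf (\<lambda>t. if t \<le> 1 then -1 / real (Suc j) else 0)) \<longlonglongrightarrow> 1"
    using tendsto_fdf_step[of 1] prob_zero_upto_1 by simp
  from order_tendstoD(1)[OF this, of "1 - e / 2"] e
  obtain j0 where j0: "1 - e / 2 < fdf (\<lambda>t. if t \<le> 1 then -1 / real (Suc j0) else 0)"
    unfolding eventually_sequentially by auto
  define \<delta> where "\<delta> = 1 / real (Suc j0)"
  have "\<delta> > 0" "\<delta> / (2 * real k) > 0" using k unfolding \<delta>_def by auto
  then obtain j :: nat where "inverse (real (Suc j)) < \<delta> / (2 * real k)"
    using reals_Archimedean[of "\<delta> / (2 * real k)"] by blast
  then have j: "1 / real (Suc j) \<le> \<delta> / (2 * real k)" by (simp add: inverse_eq_divide)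
  define A where "A = path_le N \<eta> (\<lambda>t. f t * ((real k + 1) / real k))"
  define B where "B = path_le N \<eta> (\<lambda>t. if t \<le> 1 then -1 / real (Suc j0) else 0)"
  have "continuous_on UNIV (\<lambda>x. x * ((real k + 1) / real k))" by (intro continuous_intros)
  from finite_discontinuities_comp[OF this f]
  have "A \<in> events" unfolding A_def by (rule sets_path_le[OF cont_process])
  moreover have "B \<in> events" unfolding B_def by (rule sets_path_le_step)
  ultimately have AB: "prob A - (1 - prob B) \<le> prob (A \<inter> B)" by (rule prob_Int_ge)
  have "continuous_on UNIV (\<lambda>x. x - 1 / real (Suc j))" by (intro continuous_intros)
  from finite_discontinuities_comp[OF this f]
  have shifted: "path_le N \<eta> (\<lambda>t. f t - 1 / real (Suc j)) \<in> events" by (rule sets_path_le[OF cont_process])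
  have "A \<inter> B \<subseteq> path_le N \<eta> (\<lambda>t. f t - 1 / real (Suc j))"
    unfolding A_def B_def using k(1) \<open>\<delta> > 0\<close> j
    by (intro path_le_Int_subset_shift) (auto simp: \<delta>_def)
  then have "prob (A \<inter> B) \<le> fdf (\<lambda>t. f t - 1 / real (Suc j))"
    unfolding fdf_def using shifted by (rule finite_measure_mono)
  moreover have "prob A = a * root k a" unfolding A_def a_def using fdf_mult_Suc_div[OF f k(1)] fdf_def by simp
  moreover have "a * root k a \<ge> a * (1 - e / 2)" using k(2) a by (intro mult_left_mono) auto
  moreover have "prob B \<ge> 1 - e / 2" using j0 unfolding B_def fdf_def by simp
  moreover have "a * (e / 2) \<le> e / 2" using a e by (intro mult_left_le_one_le) auto
  moreover have "a * (1 - e / 2) = a - a * (e / 2)" by (simp add: algebra_simps)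
  ultimately have "fdf f - e \<le> fdf (\<lambda>t. f t - 1 / real (Suc j))"
    using AB unfolding a_def by linarith
  then show ?thesis ..
qed

lemma tendsto_fdf_shift_down:
  assumes f: "finite (discontinuities f)"
  shows "(\<lambda>j. fdf (\<lambda>t. f t - 1 / real (Suc j))) \<longlonglongrightarrow> fdf f"
proof (rule tendsto_incseq_of_approx)
  have "continuous_on UNIV (\<lambda>x. x - c)" for c :: real by (intro continuous_intros)
  from finite_discontinuities_comp[OF this f]
  have "finite (discontinuities (\<lambda>t. f t - c))" for c :: real .
  then have mono: "fdf (\<lambda>t. f t - c) \<le> fdf (\<lambda>t. f t - c')" if "c' \<le> c" for c c'
    unfolding fdf_def using that by (intro finite_measure_mono path_le_mono sets_path_le[OF cont_process]) auto
  show "incseq (\<lambda>j. fdf (\<lambda>t. f t - 1 / real (Suc j)))"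
    by (intro incseq_SucI mono) (simp add: frac_le)
  show "fdf (\<lambda>t. f t - 1 / real (Suc j)) \<le> fdf f" for j
    using mono[of 0 "1 / real (Suc j)"] by simp
qed (rule fdf_shift_down_approx[OF f])

lemma prob_path_less_eq_fdf:
  assumes f: "finite (discontinuities f)"
  shows "prob (path_less N \<eta> f) = fdf f"
proof (rule antisym)
  show "prob (path_less N \<eta> f) \<le> fdf f"
    unfolding fdf_def by (rule measure_path_less_le_path_le[OF _ cont_process f]) unfold_locales
  show "fdf f \<le> prob (path_less N \<eta> f)"
  proof (rule LIMSEQ_le_const2[OF tendsto_fdf_shift_down[OF f]])
    show "\<exists>n0. \<forall>j\<ge>n0. fdf (\<lambda>t. f t - 1 / real (Suc j)) \<le> prob (path_less N \<eta> f)"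
      unfolding fdf_def using measure_path_le_shift_le_path_less[OF _ cont_process f] finite_measure_axioms
      by auto
  qed
qed

end

theorem mainTheorem6:
  fixes M :: "'a measure" and N :: "'b measure"
    and Y :: "'a \<Rightarrow> real \<Rightarrow> real" and Ys :: "nat \<Rightarrow> 'a \<Rightarrow> real \<Rightarrow> real"
    and \<eta> :: "'b \<Rightarrow> real \<Rightarrow> real"
    and a b :: "nat \<Rightarrow> real \<Rightarrow> real"
  assumes "prob_space M"
    and "std_max_stable N \<eta>"
    and "cont_process M Y"
    and "\<forall>i. cont_process M (Ys i)"
    and "indep_copies M Y Ys"
    and "\<forall>n. a n \<in> C01 \<and> (\<forall>t\<in>{0..1}. a n t > 0) \<and> b n \<in> C01"
  shows "(\<forall>f\<in>E01neg.
            (\<lambda>n. measure M {\<omega> \<in> space M. \<forall>t\<in>{0..1}.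
                    (MAX i\<in>{1..n}. (Ys i \<omega> t - b n t) / a n t) \<le> f t})
            \<longlonglongrightarrow> measure N {\<omega> \<in> space N. \<forall>t\<in>{0..1}. \<eta> \<omega> t \<le> f t})
     \<longleftrightarrow>
         (\<forall>f\<in>E01neg.
            (\<lambda>n. measure M {\<omega> \<in> space M. \<forall>t\<in>{0..1}.
                    (MAX i\<in>{1..n}. (Ys i \<omega> t - b n t) / a n t) < f t})
            \<longlonglongrightarrow> measure N {\<omega> \<in> space N. \<forall>t\<in>{0..1}. \<eta> \<omega> t < f t})"
proof -
  interpret std_max_stable_process N \<eta> by unfold_locales (rule assms(2))
  define X where "X n \<omega> t = (MAX i\<in>{1..n}. (Ys i \<omega> t - b n t) / a n t)" for n \<omega> t
  have X: "cont_process M (X n)" for n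
    unfolding X_def using assms(4,6) by (intro cont_process_MAX cont_process_normalize) (auto simp: C01_def)
  have "(\<forall>f\<in>E01neg. (\<lambda>n. measure M (path_le M (X n) f)) \<longlonglongrightarrow> fdf f) \<longleftrightarrow>
      (\<forall>f\<in>E01neg. (\<lambda>n. measure M (path_less M (X n) f)) \<longlonglongrightarrow> fdf f)"
  proof (rule tendsto_path_le_iff_tendsto_path_less[OF assms(1) X])
    show "(\<lambda>j. fdf (\<lambda>t. f t - 1 / real (Suc j))) \<longlonglongrightarrow> fdf f" if "f \<in> E01neg" for f
      using tendsto_fdf_shift_down E01neg_D(1)[OF that] by blast
    show "(\<lambda>j. fdf (\<lambda>t. min (f t + 1 / real (Suc j)) 0)) \<longlonglongrightarrow> fdf f" if "f \<in> E01neg" for f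
      unfolding fdf_def using E01neg_D[OF that]
      by (intro tendsto_measure_path_le_from_above[OF prob_space_axioms cont_process])
  qed (rule fdf_zero)
  also have "\<dots> \<longleftrightarrow> (\<forall>f\<in>E01neg. (\<lambda>n. measure M (path_less M (X n) f)) \<longlonglongrightarrow> prob (path_less N \<eta> f))"
    using prob_path_less_eq_fdf E01neg_D(1) by simp
  finally show ?thesis unfolding X_def path_le_def path_less_def fdf_def .
qed

end
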